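(* Let $G$ be a multiplicative monoid with identity, let $N$ be a $G$-graded near-ring, and let $P$ be a graded weakly prime ideal of $N$. If $P$ is not a graded prime ideal of $N$, then $P^2 \cap N = \{0\}$.
   Context: A near-ring $(N,+,\cdot)$ is a set with two binary operations such that $(N,+)$ is a group (not necessarily abelian), $(N,\cdot)$ is a semigroup, and $(a+b)y = ay+by$ for all $a,b,y\in N$. For a multiplicative monoid $G$ with identity, $N$ is a $G$-graded near-ring if there is a family $\{N_\sigma\}_{\sigma\in G}$ of additive normal subgroups of $N$ with $N=\bigoplus_{\sigma\in G}N_\sigma$ and $N_\sigma N_\tau\subseteq N_{\sigma\tau}$ for all $\sigma,\tau\in G$. An ideal $P$ of $N$ is graded if $P=\bigoplus_{\sigma\in G}(P\cap N_\sigma)$. For ideals $I,J$, $IJ$ denotes their product, and $P^2=PP$ (the paper writes $P^2\cap N$). A graded ideal $P$ is graded prime if for all graded ideals $I,J$ of $N$ with $IJ\subseteq P$, either $I\subseteq P$ or $J\subseteq P$. A graded ideal $P$ is graded weakly prime if for all graded ideals $I,J$ of $N$ with $\{0\}\neq IJ\subseteq P$, either $I\subseteq P$ or $J\subseteq P$. *)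

theory Defs
  imports Main
begin

text \<open>A (right) near-ring: (N,+) a group (not necessarily abelian), (N,*) a semigroup,
  and (a+b)y = ay + by.  The whole type is the near-ring N.\<close>
class near_ring = group_add + semigroup_mult +
  assumes near_ring_distrib_right: "(a + b) * y = a * y + b * y"

definition normal_addsubgroup :: "'a::group_add set \<Rightarrow> bool" where
  "normal_addsubgroup H \<longleftrightarrow> 0 \<in> H \<and> (\<forall>x\<in>H. \<forall>y\<in>H. x + y \<in> H) \<and> (\<forall>x\<in>H. - x \<in> H)
     \<and> (\<forall>g. \<forall>h\<in>H. g + h - g \<in> H)"

definition addsubgroup :: "'a::group_add set \<Rightarrow> bool" where
  "addsubgroup H \<longleftrightarrow> 0 \<in> H \<and> (\<forall>x\<in>H. \<forall>y\<in>H. x + y \<in> H) \<and> (\<forall>x\<in>H. - x \<in> H)"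

definition addsubgroup_gen :: "'a::group_add set \<Rightarrow> 'a set" where
  "addsubgroup_gen S = \<Inter> {H. addsubgroup H \<and> S \<subseteq> H}"

text \<open>Internal direct sum: the family of normal subgroups generates the whole group and each
  component meets the subgroup generated by the other components trivially.\<close>
definition graded_near_ring :: "('g::monoid_mult \<Rightarrow> 'a::near_ring set) \<Rightarrow> bool" where
  "graded_near_ring Ns \<longleftrightarrow>
     (\<forall>\<sigma>. normal_addsubgroup (Ns \<sigma>))
     \<and> addsubgroup_gen (\<Union>\<sigma>. Ns \<sigma>) = UNIV
     \<and> (\<forall>\<sigma>. Ns \<sigma> \<inter> addsubgroup_gen (\<Union>\<tau>\<in>{\<tau>. \<tau> \<noteq> \<sigma>}. Ns \<tau>) = {0})
     \<and> (\<forall>\<sigma> \<tau>. \<forall>x\<in>Ns \<sigma>. \<forall>y\<in>Ns \<tau>. x * y \<in> Ns (\<sigma> * \<tau>))"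

definition nr_ideal :: "'a::near_ring set \<Rightarrow> bool" where
  "nr_ideal I \<longleftrightarrow> normal_addsubgroup I
     \<and> (\<forall>i\<in>I. \<forall>n. i * n \<in> I)
     \<and> (\<forall>n m. \<forall>i\<in>I. n * (m + i) - n * m \<in> I)"

text \<open>Product of ideals: the set of products (equivalent for the notions used).\<close>
definition ideal_prod :: "'a::near_ring set \<Rightarrow> 'a set \<Rightarrow> 'a set" where
  "ideal_prod I J = {i * j | i j. i \<in> I \<and> j \<in> J}"

definition graded_ideal :: "('g::monoid_mult \<Rightarrow> 'a::near_ring set) \<Rightarrow> 'a set \<Rightarrow> bool" where
  "graded_ideal Ns P \<longleftrightarrow> nr_ideal P \<and> P = addsubgroup_gen (\<Union>\<sigma>. P \<inter> Ns \<sigma>)"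

definition graded_prime :: "('g::monoid_mult \<Rightarrow> 'a::near_ring set) \<Rightarrow> 'a set \<Rightarrow> bool" where
  "graded_prime Ns P \<longleftrightarrow> graded_ideal Ns P \<and>
     (\<forall>I J. graded_ideal Ns I \<longrightarrow> graded_ideal Ns J \<longrightarrow> ideal_prod I J \<subseteq> P
        \<longrightarrow> I \<subseteq> P \<or> J \<subseteq> P)"

definition graded_weakly_prime :: "('g::monoid_mult \<Rightarrow> 'a::near_ring set) \<Rightarrow> 'a set \<Rightarrow> bool" where
  "graded_weakly_prime Ns P \<longleftrightarrow> graded_ideal Ns P \<and>
     (\<forall>I J. graded_ideal Ns I \<longrightarrow> graded_ideal Ns J \<longrightarrow>
        ideal_prod I J \<noteq> {0} \<longrightarrow> ideal_prod I J \<subseteq> P \<longrightarrow> I \<subseteq> P \<or> J \<subseteq> P)"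

end

theory Submission
  imports Defs "HOL-Library.Set_Algebras"
begin

text \<open>Suppose \<open>P\<^sup>2 \<noteq> {0}\<close>; we show that \<open>P\<close> is graded prime. Let \<open>I\<close>, \<open>J\<close> be graded ideals with
  \<open>IJ \<subseteq> P\<close>. Then \<open>I + P\<close> and \<open>J + P\<close> are again graded ideals, and their product still lies in \<open>P\<close>:
  with only right distributivity available, write \<open>(i + p)(j + q) = (i(j + q) - ij) + ij + p(j + q)\<close>,
  where the first summand lies in \<open>P\<close> by the ideal axiom for left factors. This product contains
  \<open>P\<^sup>2 \<noteq> {0}\<close>, so weak primeness gives \<open>I + P \<subseteq> P\<close> or \<open>J + P \<subseteq> P\<close>, hence \<open>I \<subseteq> P\<close> or \<open>J \<subseteq> P\<close>.\<close>

lemma addsubgroup_addsubgroup_gen: "addsubgroup (addsubgroup_gen S)"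
  unfolding addsubgroup_gen_def addsubgroup_def by blast

lemma addsubgroup_gen_least: "addsubgroup H \<Longrightarrow> S \<subseteq> H \<Longrightarrow> addsubgroup_gen S \<subseteq> H"
  unfolding addsubgroup_gen_def by blast

lemma addsubgroup_gen_mono: "S \<subseteq> T \<Longrightarrow> addsubgroup_gen S \<subseteq> addsubgroup_gen T"
  unfolding addsubgroup_gen_def by blast

lemma normal_addsubgroup_imp_addsubgroup: "normal_addsubgroup H \<Longrightarrow> addsubgroup H"
  unfolding normal_addsubgroup_def addsubgroup_def by blast

lemma normal_addsubgroupD:
  assumes "normal_addsubgroup H"
  shows "0 \<in> H" and "x \<in> H \<Longrightarrow> y \<in> H \<Longrightarrow> x + y \<in> H" and "x \<in> H \<Longrightarrow> - x \<in> H"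
    and "h \<in> H \<Longrightarrow> g + h - g \<in> H"
  using assms unfolding normal_addsubgroup_def by blast+

lemma normal_addsubgroup_conj_left:
  assumes "normal_addsubgroup H" "h \<in> H"
  shows "- g + h + g \<in> H"
  using normal_addsubgroupD(4)[OF assms, of "- g"] by simp

lemma subset_set_plus_left:
  fixes A B :: "'a::monoid_add set"
  assumes "0 \<in> B"
  shows "A \<subseteq> A + B"
proof
  fix a assume "a \<in> A"
  then have "a + 0 \<in> A + B" using assms by (rule set_plus_intro)
  then show "a \<in> A + B" by simp
qed

lemma subset_set_plus_right:
  fixes A B :: "'a::monoid_add set"
  assumes "0 \<in> A"
  shows "B \<subseteq> A + B"
proof
  fix b assume "b \<in> B"
  with assms have "0 + b \<in> A + B" by (rule set_plus_intro)
  then show "b \<in> A + B" by simp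
qed

lemma addsubgroup_set_plus_subset:
  assumes "addsubgroup H" "A \<subseteq> H" "B \<subseteq> H"
  shows "A + B \<subseteq> H"
proof
  fix x assume "x \<in> A + B"
  then obtain a b where "x = a + b" "a \<in> A" "b \<in> B" by (rule set_plus_elim)
  then show "x \<in> H" using assms unfolding addsubgroup_def by blast
qed

lemma normal_addsubgroup_set_plus_commute:
  assumes "normal_addsubgroup K"
  shows "K + H \<subseteq> H + K"
proof
  fix x assume "x \<in> K + H"
  then obtain k h where "x = k + h" and "k \<in> K" "h \<in> H" by (rule set_plus_elim)
  then have "x = h + (- h + k + h)" by (simp add: add.assoc)
  also have "\<dots> \<in> H + K"
    using \<open>h \<in> H\<close> normal_addsubgroup_conj_left[OF assms \<open>k \<in> K\<close>] by (rule set_plus_intro)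
  finally show "x \<in> H + K" .
qed

lemma normal_addsubgroup_set_plus:
  fixes I P :: "'a::group_add set"
  assumes I: "normal_addsubgroup I" and P: "normal_addsubgroup P"
  shows "normal_addsubgroup (I + P)"
proof -
  note commute = normal_addsubgroup_set_plus_commute[OF P, of I]
  note I_closed = normal_addsubgroupD[OF I] and P_closed = normal_addsubgroupD[OF P]
  show ?thesis
    unfolding normal_addsubgroup_def
  proof (intro conjI ballI allI)
    have "0 + 0 \<in> I + P" using I_closed(1) P_closed(1) by (rule set_plus_intro)
    then show "0 \<in> I + P" by simp
  next
    fix x y assume "x \<in> I + P" "y \<in> I + P"
    from \<open>x \<in> I + P\<close> obtain i p where x: "x = i + p" and "i \<in> I" "p \<in> P"
      by (rule set_plus_elim)
    from \<open>y \<in> I + P\<close> obtain i' p' where y: "y = i' + p'" and "i' \<in> I" "p' \<in> P"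
      by (rule set_plus_elim)
    have "p + i' \<in> P + I" using \<open>p \<in> P\<close> \<open>i' \<in> I\<close> by (rule set_plus_intro)
    then have "p + i' \<in> I + P" by (rule subsetD[OF commute])
    then obtain i'' p'' where pi: "p + i' = i'' + p''" and "i'' \<in> I" "p'' \<in> P"
      by (rule set_plus_elim)
    have "x + y = i + (p + i') + p'" by (simp add: x y add.assoc)
    also have "\<dots> = (i + i'') + (p'' + p')" by (simp add: pi add.assoc)
    also have "\<dots> \<in> I + P"
      using I_closed(2)[OF \<open>i \<in> I\<close> \<open>i'' \<in> I\<close>] P_closed(2)[OF \<open>p'' \<in> P\<close> \<open>p' \<in> P\<close>]
      by (rule set_plus_intro)
    finally show "x + y \<in> I + P" .
  next
    fix x assume "x \<in> I + P"
    then obtain i p where x: "x = i + p" and "i \<in> I" "p \<in> P" by (rule set_plus_elim)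
    have "- x = - p + - i" by (simp add: x minus_add)
    also have "\<dots> \<in> P + I"
      using P_closed(3)[OF \<open>p \<in> P\<close>] I_closed(3)[OF \<open>i \<in> I\<close>] by (rule set_plus_intro)
    finally show "- x \<in> I + P" by (rule subsetD[OF commute])
  next
    fix g x assume "x \<in> I + P"
    then obtain i p where x: "x = i + p" and "i \<in> I" "p \<in> P" by (rule set_plus_elim)
    have "g + x - g = (g + i - g) + (g + p - g)"
      by (simp only: x diff_conv_add_uminus add.assoc minus_add_cancel)
    also have "\<dots> \<in> I + P"
      using I_closed(4)[OF \<open>i \<in> I\<close>] P_closed(4)[OF \<open>p \<in> P\<close>] by (rule set_plus_intro)
    finally show "g + x - g \<in> I + P" .
  qed
qed

lemma nr_ideal_zero: "nr_ideal I \<Longrightarrow> 0 \<in> I"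
  unfolding nr_ideal_def normal_addsubgroup_def by blast

lemma nr_ideal_set_plus:
  fixes I P :: "'a::near_ring set"
  assumes I: "nr_ideal I" and P: "nr_ideal P"
  shows "nr_ideal (I + P)"
  unfolding nr_ideal_def
proof (intro conjI ballI allI)
  show "normal_addsubgroup (I + P)"
    using I P normal_addsubgroup_set_plus unfolding nr_ideal_def by blast
next
  fix x n assume "x \<in> I + P"
  then obtain i p where x: "x = i + p" and "i \<in> I" "p \<in> P" by (rule set_plus_elim)
  have "i * n \<in> I" "p * n \<in> P" using I P \<open>i \<in> I\<close> \<open>p \<in> P\<close> unfolding nr_ideal_def by blast+
  then show "x * n \<in> I + P" by (simp add: x near_ring_distrib_right set_plus_intro)
next
  fix n m x assume "x \<in> I + P"
  then obtain i p where x: "x = i + p" and "i \<in> I" "p \<in> P" by (rule set_plus_elim)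
  have "n * (m + x) - n * m = (n * ((m + i) + p) - n * (m + i)) + (n * (m + i) - n * m)"
    by (simp only: x diff_conv_add_uminus add.assoc minus_add_cancel)
  moreover have "n * ((m + i) + p) - n * (m + i) \<in> P" "n * (m + i) - n * m \<in> I"
    using I P \<open>i \<in> I\<close> \<open>p \<in> P\<close> unfolding nr_ideal_def by blast+
  ultimately have "n * (m + x) - n * m \<in> P + I" by (metis set_plus_intro)
  then show "n * (m + x) - n * m \<in> I + P"
    using normal_addsubgroup_set_plus_commute P unfolding nr_ideal_def by blast
qed

lemma graded_ideal_nr_ideal: "graded_ideal Ns I \<Longrightarrow> nr_ideal I"
  unfolding graded_ideal_def by blast

lemma graded_ideal_subset_addsubgroup_gen:
  assumes "graded_ideal Ns I" "I \<subseteq> K"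
  shows "I \<subseteq> addsubgroup_gen (\<Union>\<sigma>. K \<inter> Ns \<sigma>)"
proof -
  have "I = addsubgroup_gen (\<Union>\<sigma>. I \<inter> Ns \<sigma>)" using assms(1) unfolding graded_ideal_def by blast
  also have "\<dots> \<subseteq> addsubgroup_gen (\<Union>\<sigma>. K \<inter> Ns \<sigma>)"
    by (rule addsubgroup_gen_mono) (use assms(2) in blast)
  finally show ?thesis .
qed

lemma graded_ideal_set_plus:
  assumes I: "graded_ideal Ns I" and P: "graded_ideal Ns P"
  shows "graded_ideal Ns (I + P)"
proof -
  have "nr_ideal I" "nr_ideal P" using I P by (simp_all add: graded_ideal_nr_ideal)
  then have ideal: "nr_ideal (I + P)" by (rule nr_ideal_set_plus)
  have "I \<subseteq> I + P" using nr_ideal_zero[OF \<open>nr_ideal P\<close>] by (rule subset_set_plus_left)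
  have "P \<subseteq> I + P" using nr_ideal_zero[OF \<open>nr_ideal I\<close>] by (rule subset_set_plus_right)
  let ?G = "addsubgroup_gen (\<Union>\<sigma>. (I + P) \<inter> Ns \<sigma>)"
  have "I + P \<subseteq> ?G"
    using addsubgroup_addsubgroup_gen
      graded_ideal_subset_addsubgroup_gen[OF I \<open>I \<subseteq> I + P\<close>]
      graded_ideal_subset_addsubgroup_gen[OF P \<open>P \<subseteq> I + P\<close>]
    by (rule addsubgroup_set_plus_subset)
  moreover have "?G \<subseteq> I + P"
  proof (rule addsubgroup_gen_least)
    show "addsubgroup (I + P)"
      using ideal normal_addsubgroup_imp_addsubgroup unfolding nr_ideal_def by blast
  qed blast
  ultimately have "I + P = ?G" ..
  with ideal show ?thesis unfolding graded_ideal_def ..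
qed

lemma ideal_prod_mono: "I \<subseteq> I' \<Longrightarrow> J \<subseteq> J' \<Longrightarrow> ideal_prod I J \<subseteq> ideal_prod I' J'"
  unfolding ideal_prod_def by blast

lemma ideal_prod_set_plus_subset:
  assumes P: "nr_ideal P" and IJ: "ideal_prod I J \<subseteq> P"
  shows "ideal_prod (I + P) (J + P) \<subseteq> P"
proof
  fix x assume "x \<in> ideal_prod (I + P) (J + P)"
  then obtain i p j q where x: "x = (i + p) * (j + q)"
    and "i \<in> I" "p \<in> P" "j \<in> J" "q \<in> P"
    unfolding ideal_prod_def by (auto elim!: set_plus_elim)
  have "x = ((i * (j + q) - i * j) + i * j) + p * (j + q)"
    by (simp add: x near_ring_distrib_right)
  moreover have "i * (j + q) - i * j \<in> P" "p * (j + q) \<in> P"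
    using P \<open>q \<in> P\<close> \<open>p \<in> P\<close> unfolding nr_ideal_def by blast+
  moreover have "i * j \<in> P" using IJ \<open>i \<in> I\<close> \<open>j \<in> J\<close> unfolding ideal_prod_def by blast
  ultimately show "x \<in> P"
    using P normal_addsubgroupD(2) unfolding nr_ideal_def by metis
qed

lemma graded_weakly_prime_imp_graded_prime:
  assumes weakly_prime: "graded_weakly_prime Ns P" and square: "ideal_prod P P \<noteq> {0}"
  shows "graded_prime Ns P"
  unfolding graded_prime_def
proof (intro conjI allI impI)
  show P: "graded_ideal Ns P" using weakly_prime unfolding graded_weakly_prime_def by blast
  fix I J assume I: "graded_ideal Ns I" and J: "graded_ideal Ns J" and IJ: "ideal_prod I J \<subseteq> P"
  have "nr_ideal P" using P by (rule graded_ideal_nr_ideal)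
  have "0 \<in> I" "0 \<in> J" "0 \<in> P"
    using I J P by (blast intro: nr_ideal_zero graded_ideal_nr_ideal)+
  have "I \<subseteq> I + P" "J \<subseteq> J + P"
    by (rule subset_set_plus_left[OF \<open>0 \<in> P\<close>])+
  have "P \<subseteq> I + P" "P \<subseteq> J + P"
    by (rule subset_set_plus_right[OF \<open>0 \<in> I\<close>], rule subset_set_plus_right[OF \<open>0 \<in> J\<close>])
  have "ideal_prod P P \<subseteq> ideal_prod (I + P) (J + P)"
    using \<open>P \<subseteq> I + P\<close> \<open>P \<subseteq> J + P\<close> by (rule ideal_prod_mono)
  moreover have "ideal_prod P P \<noteq> {}" using \<open>0 \<in> P\<close> unfolding ideal_prod_def by blast
  ultimately have "ideal_prod (I + P) (J + P) \<noteq> {0}" using square by (auto simp: subset_singleton_iff)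
  then have "I + P \<subseteq> P \<or> J + P \<subseteq> P"
    using weakly_prime graded_ideal_set_plus[OF I P] graded_ideal_set_plus[OF J P]
      ideal_prod_set_plus_subset[OF \<open>nr_ideal P\<close> IJ]
    unfolding graded_weakly_prime_def by blast
  then show "I \<subseteq> P \<or> J \<subseteq> P" using \<open>I \<subseteq> I + P\<close> \<open>J \<subseteq> J + P\<close> by blast
qed

theorem theorem1:
  fixes Ns :: "'g::monoid_mult \<Rightarrow> 'a::near_ring set" and P :: "'a set"
  assumes "graded_near_ring Ns"
    and "graded_weakly_prime Ns P"
    and "\<not> graded_prime Ns P"
  shows "ideal_prod P P = {0}"
  using graded_weakly_prime_imp_graded_prime assms(2,3) by blast

end
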